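(* Let $n$ be an even positive integer, $p$ a prime dividing $n$, and $p^a$ the largest power of $p$ dividing $n$. Suppose there is a prime $q$ with $n/3<q<n/2$ and $n-2q<p^a$. Then: (a) if $p=2$, for every $1\le k\le n-1$ the coefficient $\binom{n}{k}$ is divisible by $2$ or $q$; (b) if $p\ne2$, then $\binom{n}{k}$ is divisible by $p$ or $q$ for all $1\le k\le n-1$ if and only if $\binom{n}{n/2}$ is divisible by $p$. *)

theory Defs
  imports Complex_Main "HOL-Computational_Algebra.Primes"
begin

end

theory Submission
  imports Defs
begin

(* Write n = 2q + r, so 0 < r < q and r < p^a.  Since n < q^2, q divides (n choose k) exactly
   when the base-q digits of k and n - k carry, which happens for r < k < q and for its mirror
   image q + r < k < 2q.  Every other k with 0 < k < n is within distance r < p^a of 0, n or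
   n/2; then p^a cannot divide k, n - k or 2k - n respectively unless k = n/2, and
   k (n choose k) = n (n-1 choose k-1) shows that p divides (n choose k).  For the central
   coefficient q never divides it, while 2 always does. *)

lemma multiplicity_prime_below_square:
  fixes q i :: nat
  assumes "prime q" "0 < i" "i < q * q"
  shows "multiplicity q i = (if q dvd i then 1 else 0)"
proof (cases "q dvd i")
  case True
  then obtain t where t: "i = q * t" by blast
  with assms have "0 < t" "t < q" by auto
  then have "\<not> q dvd t" by (simp add: nat_dvd_not_less)
  have "multiplicity q i = Suc (multiplicity q t)"
    unfolding t using \<open>0 < t\<close> assms(1) by (intro multiplicity_times_same) auto
  with True \<open>\<not> q dvd t\<close> show ?thesis by (simp add: not_dvd_imp_multiplicity_0)
qed (simp add: not_dvd_imp_multiplicity_0)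

lemma multiplicity_fact_below_square:
  fixes q N :: nat
  assumes "prime q" "N < q * q"
  shows "multiplicity q (fact N :: nat) = N div q"
  using assms(2)
proof (induction N)
  case (Suc N)
  have "multiplicity q (fact (Suc N) :: nat) = multiplicity q (Suc N) + multiplicity q (fact N :: nat)"
    using assms(1) unfolding fact_Suc
    by (metis prime_elem_multiplicity_mult_distrib prime_imp_prime_elem fact_nonzero of_nat_id nat.distinct(1))
  also have "\<dots> = (if q dvd Suc N then 1 else 0) + N div q"
    using Suc multiplicity_prime_below_square[OF assms(1), of "Suc N"] by simp
  also have "\<dots> = Suc N div q"
    using assms(1) by (auto simp: div_Suc prime_gt_1_nat dvd_eq_mod_eq_0)
  finally show ?case .
qed simp

text \<open>Kummer's criterion in the range where at most one carry can occur.\<close>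

lemma prime_dvd_choose_iff_div_sum_less:
  fixes q n k :: nat
  assumes "prime q" "n < q * q" "k \<le> n"
  shows "q dvd (n choose k) \<longleftrightarrow> k div q + (n - k) div q < n div q"
proof -
  have nonzero: "(n choose k) \<noteq> 0" using assms(3) by simp
  have "multiplicity q (fact n :: nat)
      = multiplicity q (fact k :: nat) + multiplicity q (fact (n - k) :: nat) + multiplicity q (n choose k)"
    unfolding binomial_fact_lemma[OF assms(3), symmetric] using assms(1) nonzero
    by (simp add: prime_elem_multiplicity_mult_distrib)
  then have "multiplicity q (n choose k) = n div q - k div q - (n - k) div q"
    using multiplicity_fact_below_square[OF assms(1)] assms by simp
  then show ?thesis
    using prime_multiplicity_gt_zero_iff[of q "n choose k"] assms(1) nonzero by simp
qed

lemma prime_dvd_choose_if_not_power_dvd: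
  fixes p n k a :: nat
  assumes "prime p" "p ^ a dvd n" "0 < k" "\<not> p ^ a dvd k"
  shows "p dvd (n choose k)"
proof (rule ccontr)
  assume "\<not> p dvd (n choose k)"
  then have "coprime (p ^ a) (n choose k)"
    using assms(1) by (simp add: prime_imp_coprime coprime_power_left_iff)
  moreover have "p ^ a dvd k * (n choose k)"
    unfolding times_binomial_minus1_eq[OF assms(3)] using assms(2) by simp
  ultimately have "p ^ a dvd k" by (simp add: coprime_dvd_mult_left_iff)
  with assms(4) show False by contradiction
qed

lemma prime_dvd_choose_near_half:
  fixes p n k a :: nat
  assumes "prime p" "p ^ a dvd n" "0 < k" "2 * k \<noteq> n"
    and "2 * k < n + p ^ a" "n < 2 * k + p ^ a"
  shows "p dvd (n choose k)"
proof (intro prime_dvd_choose_if_not_power_dvd[OF assms(1-3)] notI)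
  assume "p ^ a dvd k"
  with assms(2) have divides: "int (p ^ a) dvd 2 * int k - int n"
    by (metis dvd_diff dvd_mult int_dvd_int_iff)
  have nonzero: "2 * int k - int n \<noteq> 0" using assms(4) by linarith
  have "\<bar>int (p ^ a)\<bar> \<le> \<bar>2 * int k - int n\<bar>"
    using dvd_imp_le_int[OF nonzero divides] .
  with assms(5,6) show False by linarith
qed

lemma even_central_choose:
  fixes m :: nat
  assumes "0 < m"
  shows "even (2 * m choose m)"
proof -
  have "2 * m choose m = 2 * (2 * m - 1 choose (m - 1))"
    using times_binomial_minus1_eq[OF assms, of "2 * m"] assms by auto
  then show ?thesis by simp
qed

lemma prime_not_dvd_central_choose:
  fixes q r :: nat
  assumes "prime q" "even r" "r < q" "2 * q + r < q * q"
  shows "\<not> q dvd (2 * q + r choose (q + r div 2))"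
proof -
  have "(q + r div 2) div q = 1" "(2 * q + r) div q = 2"
    using assms(3) by (auto intro: div_nat_eqI)
  moreover have "2 * q + r - (q + r div 2) = q + r div 2"
    using assms(2) by presburger
  ultimately show ?thesis
    using prime_dvd_choose_iff_div_sum_less[OF assms(1,4), of "q + r div 2"] by simp
qed

lemma prime_dvd_choose_off_centre:
  fixes p q n r a k :: nat
  assumes "prime p" "prime q" "p ^ a dvd n" "n = 2 * q + r" "r < q" "r < p ^ a" "n < q * q"
    and "0 < k" "k < n" "2 * k \<noteq> n"
  shows "p dvd (n choose k) \<or> q dvd (n choose k)"
proof -
  consider "k \<le> r" | "n - k \<le> r" | "q \<le> k" "k \<le> q + r"
    | "r < k" "r < n - k" "k < q \<or> n - k < q"
    using assms(4) by linarith
  then show ?thesis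
  proof cases
    case 1
    then have "\<not> p ^ a dvd k" using assms(6,8) by (auto dest: dvd_imp_le)
    then show ?thesis using prime_dvd_choose_if_not_power_dvd assms(1,3,8) by blast
  next
    case 2
    then have "\<not> p ^ a dvd n - k" using assms(6,9) by (auto dest: dvd_imp_le)
    then have "p dvd (n choose (n - k))"
      using prime_dvd_choose_if_not_power_dvd assms(1,3,9) by simp
    then show ?thesis using assms(9) by (simp add: binomial_symmetric[symmetric])
  next
    case 3
    then show ?thesis
      using prime_dvd_choose_near_half[OF assms(1,3,8,10)] assms(4,6) by linarith
  next
    case 4
    have "k div q + (n - k) div q < n div q"
    proof -
      have "n div q = 2" using assms(4,5) by (auto intro: div_nat_eqI)
      moreover have "k div q < 2" "(n - k) div q < 2"
        using 4 assms(4) by (auto intro: less_mult_imp_div_less)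
      moreover have "k div q = 0 \<or> (n - k) div q = 0" using 4(3) by auto
      ultimately show ?thesis by linarith
    qed
    then show ?thesis using prime_dvd_choose_iff_div_sum_less assms(2,7,9) by simp
  qed
qed

theorem mainTheorem10:
  fixes n p q :: nat
  assumes "n > 0" and "even n"
    and "prime p" and "p dvd n"
    and "prime q"
    and "real n / 3 < real q" and "real q < real n / 2"
    and "n - 2 * q < p ^ multiplicity p n"
  shows "(p = 2 \<longrightarrow> (\<forall>k. 1 \<le> k \<and> k \<le> n - 1 \<longrightarrow> 2 dvd (n choose k) \<or> q dvd (n choose k)))
       \<and> (p \<noteq> 2 \<longrightarrow>
            ((\<forall>k. 1 \<le> k \<and> k \<le> n - 1 \<longrightarrow> p dvd (n choose k) \<or> q dvd (n choose k))
             \<longleftrightarrow> p dvd (n choose (n div 2))))"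
proof -
  define r where "r = n - 2 * q"
  have n: "n = 2 * q + r" "r < q" using assms(6,7) unfolding r_def by linarith+
  have r_bound: "r < p ^ multiplicity p n" using assms(8) unfolding r_def .
  have "0 < r" using assms(7) unfolding r_def by linarith
  then have "3 \<le> q" using n assms(2) prime_ge_2_nat[OF assms(5)] by presburger
  then have "n < q * q" using n mult_le_mono1[of 3 q q] by linarith
  have off_centre: "p dvd (n choose k) \<or> q dvd (n choose k)"
    if "1 \<le> k" "k \<le> n - 1" "k \<noteq> n div 2" for k
  proof (rule prime_dvd_choose_off_centre[OF assms(3,5) multiplicity_dvd n r_bound \<open>n < q * q\<close>])
    show "0 < k" "k < n" "2 * k \<noteq> n" using that assms(1,2) by auto
  qed
  have central: "n div 2 = q + r div 2" "1 \<le> n div 2 \<and> n div 2 \<le> n - 1"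
    using n assms(2) \<open>3 \<le> q\<close> by presburger+
  have q_central: "\<not> q dvd (n choose (n div 2))"
    using prime_not_dvd_central_choose[OF assms(5), of r] n assms(2) \<open>n < q * q\<close> central(1) by simp
  have even_central: "even (n choose (n div 2))"
    using even_central_choose[of "n div 2"] assms(1,2) by auto
  show ?thesis
  proof (intro conjI impI iffI allI)
    fix k assume "p = 2" "1 \<le> k \<and> k \<le> n - 1"
    then show "2 dvd (n choose k) \<or> q dvd (n choose k)"
      using off_centre[of k] even_central by (cases "k = n div 2") auto
  next
    assume "\<forall>k. 1 \<le> k \<and> k \<le> n - 1 \<longrightarrow> p dvd (n choose k) \<or> q dvd (n choose k)"
    then show "p dvd (n choose (n div 2))" using central(2) q_central by blast
  next
    fix k assume "p dvd (n choose (n div 2))" "1 \<le> k \<and> k \<le> n - 1"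
    then show "p dvd (n choose k) \<or> q dvd (n choose k)"
      using off_centre[of k] by (cases "k = n div 2") auto
  qed
qed

end
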